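(* Let $\Gamma=([n],E)$ be a connected simple graph and let $M\subseteq[n]$ be a subset of maximal cardinality such that the induced subgraph $\Gamma|_M$ is isomorphic to the path $L_{|M|}$. Then for every integer $k\ge|M|$, $\Psi^k_q(\Gamma^{\mathbf 1})=\Psi^{|M|-1}_q(\Gamma^{\mathbf 1})$.
   Context: $L_r$ is the path graph on $r$ vertices. Decorated graphs: a decorated graph $\Gamma^w=(V,E,w)$ is a finite simple graph with $w:E\to\{1,2,\dots\}$; $\Gamma^{\mathbf 1}$ is $\Gamma$ with $w\equiv1$. For $S\subseteq V$: $\Gamma^w|_S$ is the induced decorated subgraph on $S$; $\Gamma^w/S$ is the decorated graph on $V\setminus S$ with an edge $uv$ whenever $\Gamma$ has a path from $u$ to $v$ with all internal vertices in $S$ (a direct edge counting as a path without internal vertices), decorated by the minimum over such paths of the sum of decorations along it. For an integer $m\ge0$, $\mathrm{pr}_m$ deletes all edges of decoration $>m$. Let $\mathcal{G}^{W,m}$ be the Hopf algebra spanned by isomorphism classes of decorated graphs (graded by number of vertices), with product disjoint union and coproduct $\Delta_m(\Gamma^w)=\sum_{S\subseteq V}\mathrm{pr}_m(\Gamma^w|_S)\otimes\mathrm{pr}_m(\Gamma^w/S)$. Let $\zeta_q(\Gamma^w)=q^{|V|-c(\Gamma)}$, $c$ = number of connected components. For $\alpha=(\alpha_1,\dots,\alpha_k)\models n$, $M_\alpha=\sum_{i_1<\cdots<i_k}x_{i_1}^{\alpha_1}\cdots x_{i_k}^{\alpha_k}$. Define $\Psi^m_q(\Gamma^w)=\sum_{\alpha\models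 n}(\zeta_q)_\alpha(\Gamma^w)M_\alpha$ with $(\zeta_q)_\alpha=\zeta_q^{\otimes k}\circ(p_{\alpha_1}\otimes\cdots\otimes p_{\alpha_k})\circ\Delta_m^{(k-1)}$ ($p_i$ projection to degree $i$, $\Delta_m^{(k-1)}$ iterated coproduct), i.e. the unique morphism of combinatorial Hopf algebras $(\mathcal{G}^{W,m},\zeta_q)\to(\mathcal{Q}Sym,\zeta)$. *)

theory Defs
  imports Main
begin

text \<open>A decorated graph is a pair (V, w): a finite vertex set V of naturals and a
 symmetric weight function w, where w u v = 0 means "no edge" and w u v \<ge> 1 is the
 decoration of the edge uv.\<close>

type_synonym dgraph = "nat set \<times> (nat \<Rightarrow> nat \<Rightarrow> nat)"

definition dg_restrict :: "nat set \<Rightarrow> dgraph \<Rightarrow> dgraph" where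
  "dg_restrict S G = (S, \<lambda>u v. if u \<in> S \<and> v \<in> S then snd G u v else 0)"

definition path_in :: "dgraph \<Rightarrow> nat set \<Rightarrow> nat \<Rightarrow> nat \<Rightarrow> nat list \<Rightarrow> bool" where
  "path_in G S u v p \<longleftrightarrow> length p \<ge> 2 \<and> hd p = u \<and> last p = v \<and> distinct p \<and>
     set p \<subseteq> fst G \<and>
     (\<forall>i < length p - 1. snd G (p ! i) (p ! Suc i) > 0) \<and>
     (\<forall>i. 0 < i \<and> i < length p - 1 \<longrightarrow> p ! i \<in> S)"

definition path_weight :: "dgraph \<Rightarrow> nat list \<Rightarrow> nat" where
  "path_weight G p = (\<Sum>i < length p - 1. snd G (p ! i) (p ! Suc i))"

definition dg_contract :: "nat set \<Rightarrow> dgraph \<Rightarrow> dgraph" where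
  "dg_contract S G = (fst G - S, \<lambda>u v.
     if u \<in> fst G - S \<and> v \<in> fst G - S \<and> u \<noteq> v \<and> (\<exists>p. path_in G S u v p)
     then (LEAST c. \<exists>p. path_in G S u v p \<and> path_weight G p = c) else 0)"

definition dg_pr :: "nat \<Rightarrow> dgraph \<Rightarrow> dgraph" where
  "dg_pr m G = (fst G, \<lambda>u v. if snd G u v \<le> m then snd G u v else 0)"

definition dg_adj :: "dgraph \<Rightarrow> (nat \<times> nat) set" where
  "dg_adj G = {(x, y). x \<in> fst G \<and> y \<in> fst G \<and> snd G x y > 0}"

definition ncomp :: "dgraph \<Rightarrow> nat" where
  "ncomp G = card (fst G // ((dg_adj G)\<^sup>*))"

definition zeta_q :: "'a::comm_ring_1 \<Rightarrow> dgraph \<Rightarrow> 'a" where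
  "zeta_q q G = q ^ (card (fst G) - ncomp G)"

text \<open>(zeta_q)_alpha computed with the coproduct Delta_m, iterating as
 Delta^(k-1) = (id \<otimes> Delta^(k-2)) \<circ> Delta_m; the empty composition gives the counit.\<close>
fun zeta_comp :: "nat \<Rightarrow> 'a::comm_ring_1 \<Rightarrow> nat list \<Rightarrow> dgraph \<Rightarrow> 'a" where
  "zeta_comp m q [] G = (if fst G = {} then 1 else 0)"
| "zeta_comp m q (a # as) G =
     (\<Sum>S \<in> {S. S \<subseteq> fst G \<and> card S = a}.
        zeta_q q (dg_pr m (dg_restrict S G)) * zeta_comp m q as (dg_pr m (dg_contract S G)))"

definition is_composition :: "nat list \<Rightarrow> nat \<Rightarrow> bool" where
  "is_composition \<alpha> n \<longleftrightarrow> (\<forall>a \<in> set \<alpha>. a > 0) \<and> sum_list \<alpha> = n"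

text \<open>Psi^m_q(G), represented by its coefficient vector in the monomial basis M_alpha
 of QSym (the M_alpha are linearly independent).\<close>
definition Psi :: "nat \<Rightarrow> 'a::comm_ring_1 \<Rightarrow> dgraph \<Rightarrow> nat list \<Rightarrow> 'a" where
  "Psi m q G \<alpha> = (if is_composition \<alpha> (card (fst G)) then zeta_comp m q \<alpha> G else 0)"

definition one_graph :: "nat \<Rightarrow> (nat \<Rightarrow> nat \<Rightarrow> bool) \<Rightarrow> dgraph" where
  "one_graph n E = ({1..n}, \<lambda>u v. if u \<in> {1..n} \<and> v \<in> {1..n} \<and> E u v then 1 else 0)"

definition simple_graph_on :: "nat set \<Rightarrow> (nat \<Rightarrow> nat \<Rightarrow> bool) \<Rightarrow> bool" where
  "simple_graph_on V E \<longleftrightarrow> (\<forall>u\<in>V. \<forall>v\<in>V. E u v \<longrightarrow> E v u) \<and> (\<forall>u\<in>V. \<not> E u u)"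

definition connected_on :: "nat set \<Rightarrow> (nat \<Rightarrow> nat \<Rightarrow> bool) \<Rightarrow> bool" where
  "connected_on V E \<longleftrightarrow> V \<noteq> {} \<and>
     (\<forall>u\<in>V. \<forall>v\<in>V. (u, v) \<in> {(x, y). x \<in> V \<and> y \<in> V \<and> E x y}\<^sup>*)"

definition path_graph_edge :: "nat \<Rightarrow> nat \<Rightarrow> bool" where
  "path_graph_edge i j \<longleftrightarrow> j = i + 1 \<or> i = j + 1"

definition induced_path :: "(nat \<Rightarrow> nat \<Rightarrow> bool) \<Rightarrow> nat set \<Rightarrow> bool" where
  "induced_path E M \<longleftrightarrow> (\<exists>f. bij_betw f {1..card M} M \<and>
     (\<forall>i\<in>{1..card M}. \<forall>j\<in>{1..card M}. E (f i) (f j) \<longleftrightarrow> path_graph_edge i j))"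

end

theory Submission
  imports Defs
begin

(* Every graph occurring as a right tensor factor of an iterated coproduct of Gamma^1 is a
   contraction Gamma^1/A, whose decoration of uv is the number of edges of a shortest walk in
   Gamma from u to v with interior in A; contracting such a graph once more stays of this form.
   A shortest walk has no chords, so it spans an induced path of Gamma and has at most |M|
   vertices. Hence all decorations, also those of the restrictions, are at most |M| - 1, so
   pr_m acts as the identity throughout the computation of (zeta_q)_alpha for every
   m >= |M| - 1. *)

fun walk_via :: "dgraph \<Rightarrow> nat set \<Rightarrow> nat list \<Rightarrow> bool" where
  "walk_via G X [] = False"
| "walk_via G X [x] = False"
| "walk_via G X [x, y] \<longleftrightarrow> x \<in> fst G \<and> y \<in> fst G \<and> 0 < snd G x y"
| "walk_via G X (x # y # z # r) \<longleftrightarrow>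
     x \<in> fst G \<and> 0 < snd G x y \<and> y \<in> X \<and> walk_via G X (y # z # r)"

fun walk_weight :: "dgraph \<Rightarrow> nat list \<Rightarrow> nat" where
  "walk_weight G (x # y # r) = snd G x y + walk_weight G (y # r)"
| "walk_weight G _ = 0"

lemma walk_via_length: "walk_via G X p \<Longrightarrow> 2 \<le> length p"
  by (induction G X p rule: walk_via.induct) auto

lemma walk_via_subset: "walk_via G X p \<Longrightarrow> set p \<subseteq> fst G"
  by (induction G X p rule: walk_via.induct) auto

lemma walk_via_mono: "walk_via G X p \<Longrightarrow> X \<subseteq> Y \<Longrightarrow> walk_via G Y p"
  by (induction G X p rule: walk_via.induct) auto

lemma walk_via_empty: "walk_via G {} p \<Longrightarrow> length p = 2"
  by (induction G "{} :: nat set" p rule: walk_via.induct) auto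

lemma walk_weight_pos: "walk_via G X p \<Longrightarrow> 0 < walk_weight G p"
  by (induction G X p rule: walk_via.induct) auto

lemma walk_via_Cons_Cons:
  "walk_via G X (x # y # r) \<longleftrightarrow>
     x \<in> fst G \<and> 0 < snd G x y \<and> (if r = [] then y \<in> fst G else y \<in> X \<and> walk_via G X (y # r))"
  by (cases r) auto

lemma all_interior_nth_Cons:
  "(\<forall>i. 0 < i \<and> i < Suc m \<longrightarrow> (x # q) ! i \<in> X) \<longleftrightarrow> (\<forall>i < m. q ! i \<in> X)"
  by (metis Suc_less_eq gr0_conv_Suc nth_Cons_Suc zero_less_Suc)

lemma walk_via_iff_nth:
  "walk_via G X p \<longleftrightarrow> 2 \<le> length p \<and> set p \<subseteq> fst G \<and>
     (\<forall>i < length p - 1. 0 < snd G (p ! i) (p ! Suc i)) \<and>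
     (\<forall>i. 0 < i \<and> i < length p - 1 \<longrightarrow> p ! i \<in> X)"
proof (induction G X p rule: walk_via.induct)
  case (3 G X x y)
  then show ?case by (auto simp: less_Suc_eq)
next
  case (4 G X x y z r)
  then show ?case
    by (simp only: all_interior_nth_Cons length_Cons diff_Suc_1 All_less_Suc2)
      (auto simp: all_interior_nth_Cons)
qed auto

lemma path_in_iff_walk_via:
  "path_in G S u v p \<longleftrightarrow> walk_via G S p \<and> hd p = u \<and> last p = v \<and> distinct p"
  unfolding path_in_def walk_via_iff_nth by auto

lemma path_weight_eq_walk_weight: "path_weight G p = walk_weight G p"
proof (induction G p rule: walk_weight.induct)
  case (1 G x y r)
  have "path_weight G (x # y # r) = snd G x y + path_weight G (y # r)"
    unfolding path_weight_def by (simp add: sum.lessThan_Suc_shift del: sum.lessThan_Suc)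
  with 1 show ?case by simp
qed (auto simp: path_weight_def)

lemma walk_via_append:
  "a \<noteq> [] \<Longrightarrow> b \<noteq> [] \<Longrightarrow>
     walk_via G X (a @ x # b) \<longleftrightarrow> walk_via G X (a @ [x]) \<and> walk_via G X (x # b) \<and> x \<in> X"
proof (induction a)
  case (Cons y a)
  show ?case
  proof (cases a)
    case Nil
    then show ?thesis using Cons.prems walk_via_subset[of G X "x # b"] by (cases b) auto
  next
    case (Cons y' a')
    with Cons.IH Cons.prems show ?thesis
      by (auto simp: walk_via_Cons_Cons simp del: walk_via.simps(4))
  qed
qed simp

lemma walk_via_join:
  assumes p: "walk_via G X p" and q: "walk_via G X q" and y: "last p = y" "hd q = y" "y \<in> X"
  shows "walk_via G X (butlast p @ q)" "hd (butlast p @ q) = hd p" "last (butlast p @ q) = last q"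
    "length (butlast p @ q) = length p + length q - 1"
proof -
  define a b where "a = butlast p" and "b = tl q"
  have "2 \<le> length p" "2 \<le> length q" using walk_via_length p q by auto
  then have ne: "a \<noteq> []" "b \<noteq> []" unfolding a_def b_def by (auto simp flip: length_0_conv)
  have "p = a @ [y]" "q = y # b"
    using y \<open>2 \<le> length p\<close> \<open>2 \<le> length q\<close> append_butlast_last_id[of p] list.collapse[of q]
    unfolding a_def b_def by (auto simp flip: length_0_conv)
  with ne p q y(3) show "walk_via G X (butlast p @ q)" "hd (butlast p @ q) = hd p"
    "last (butlast p @ q) = last q" "length (butlast p @ q) = length p + length q - 1"
    using walk_via_append[OF ne, of G X y] by simp_all
qed

lemma walk_via_interior_subset:
  "walk_via G X (u # a @ [x]) \<Longrightarrow> set a \<subseteq> Y \<Longrightarrow> walk_via G Y (u # a @ [x])"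
proof (induction a arbitrary: u)
  case (Cons y a)
  then show ?case by (cases a) auto
qed simp

lemma walk_via_split_first:
  assumes "walk_via G X (u # t)" "last t \<in> A"
  obtains a x b where "t = a @ x # b" "x \<in> A" "set a \<inter> A = {}" "walk_via G X (u # a @ [x])"
    "b \<noteq> [] \<Longrightarrow> walk_via G X (x # b) \<and> x \<in> X"
proof -
  have "t \<noteq> []" using walk_via_length[OF assms(1)] by auto
  with assms(2) have "\<exists>x \<in> set t. x \<in> A" by auto
  then obtain a x b where t: "t = a @ x # b" "x \<in> A" "\<forall>y \<in> set a. y \<notin> A"
    using split_list_first_prop[of t "\<lambda>x. x \<in> A"] by blast
  have "walk_via G X (u # a @ [x]) \<and> (b \<noteq> [] \<longrightarrow> walk_via G X (x # b) \<and> x \<in> X)"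
    using assms(1) walk_via_append[of "u # a" b G X x] t(1) by (cases "b = []") auto
  with t that show ?thesis by blast
qed

lemma walk_via_remove_loop:
  assumes w: "walk_via G X (a @ x # m @ x # c)" and ne: "a \<noteq> [] \<or> c \<noteq> []"
  shows "walk_via G X (a @ x # c)"
proof -
  have A: "a \<noteq> [] \<Longrightarrow> walk_via G X (a @ [x]) \<and> x \<in> X"
    using walk_via_append[of a "m @ x # c" G X x] w by auto
  have C: "c \<noteq> [] \<Longrightarrow> walk_via G X (x # c) \<and> x \<in> X"
    using walk_via_append[of "a @ x # m" c G X x] w by auto
  show ?thesis
    using A C ne walk_via_append[of a c G X x] by (cases "a = []"; cases "c = []") auto
qed

lemma walk_via_shortcut:
  assumes w: "walk_via G X (a @ x # m @ y # c)" and xy: "walk_via G X [x, y]"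
  shows "walk_via G X (a @ x # y # c)"
proof -
  have A: "a \<noteq> [] \<Longrightarrow> walk_via G X (a @ [x]) \<and> x \<in> X"
    using walk_via_append[of a "m @ y # c" G X x] w by auto
  have C: "c \<noteq> [] \<Longrightarrow> walk_via G X (y # c) \<and> y \<in> X"
    using walk_via_append[of "a @ x # m" c G X y] w by auto
  have "walk_via G X (x # y # c)"
    using C xy walk_via_append[of "[x]" c G X y] by (cases "c = []") auto
  then show ?thesis
    using A walk_via_append[of a "y # c" G X x] by (cases "a = []") auto
qed

definition shortest_walk :: "dgraph \<Rightarrow> nat set \<Rightarrow> nat \<Rightarrow> nat \<Rightarrow> nat list \<Rightarrow> bool" where
  "shortest_walk G X u v p \<longleftrightarrow> walk_via G X p \<and> hd p = u \<and> last p = v \<and>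
     (\<forall>q. walk_via G X q \<and> hd q = u \<and> last q = v \<longrightarrow> length p \<le> length q)"

lemma shortest_walk_exists:
  assumes "walk_via G X p" "hd p = u" "last p = v"
  obtains p' where "shortest_walk G X u v p'" "length p' \<le> length p"
  using ex_has_least_nat[of "\<lambda>q. walk_via G X q \<and> hd q = u \<and> last q = v" p length] assms
  unfolding shortest_walk_def by blast

lemma shortest_walk_distinct:
  assumes sw: "shortest_walk G X u v p" and "u \<noteq> v"
  shows "distinct p"
proof (rule ccontr)
  assume "\<not> distinct p"
  then obtain a x m c where p: "p = a @ [x] @ m @ [x] @ c"
    using not_distinct_decomp by blast
  have w: "walk_via G X p" "hd p = u" "last p = v" using sw unfolding shortest_walk_def by auto
  have ne: "a \<noteq> [] \<or> c \<noteq> []" using w \<open>u \<noteq> v\<close> p by auto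
  define q where "q = a @ x # c"
  have "walk_via G X q" unfolding q_def using walk_via_remove_loop[of G X a x m c] w(1) p ne by simp
  moreover have "hd q = u" using w p unfolding q_def by (cases a) auto
  moreover have "last q = v" using w p unfolding q_def by (cases c) auto
  ultimately have "length p \<le> length q" using sw unfolding shortest_walk_def by blast
  then show False unfolding p q_def by simp
qed

lemma split_at_two_nth:
  assumes "i < j" "j < length p"
  shows "p = take i p @ p ! i # take (j - Suc i) (drop (Suc i) p) @ p ! j # drop (Suc j) p"
proof -
  have "drop (Suc i) p = take (j - Suc i) (drop (Suc i) p) @ drop j p"
    using assms by (metis Suc_leI append_take_drop_id drop_drop le_add_diff_inverse2)
  then show ?thesis
    using assms by (metis Cons_nth_drop_Suc id_take_nth_drop less_trans)
qed

lemma shortest_walk_no_chord: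
  assumes sw: "shortest_walk G X u v p" and ij: "i + 1 < j" "j < length p"
  shows "snd G (p ! i) (p ! j) = 0"
proof (rule ccontr)
  assume chord: "snd G (p ! i) (p ! j) \<noteq> 0"
  have w: "walk_via G X p" "hd p = u" "last p = v" using sw unfolding shortest_walk_def by auto
  define x y where "x = p ! i" and "y = p ! j"
  define a m c where "a = take i p" and "m = take (j - Suc i) (drop (Suc i) p)"
    and "c = drop (Suc j) p"
  have p: "p = a @ x # m @ y # c"
    unfolding a_def m_def c_def x_def y_def using split_at_two_nth[of i j p] ij by simp
  have "m \<noteq> []" unfolding m_def using ij by simp
  have "{x, y} \<subseteq> fst G" using walk_via_subset[OF w(1)] ij unfolding x_def y_def by auto
  with chord have "walk_via G X [x, y]" unfolding x_def y_def by simp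
  define q where "q = a @ x # y # c"
  have "walk_via G X q"
    unfolding q_def using walk_via_shortcut \<open>walk_via G X [x, y]\<close> w(1) p by metis
  moreover have "hd q = u" using w p unfolding q_def by (cases a) auto
  moreover have "last q = v" using w p unfolding q_def by (cases c) auto
  ultimately have "length p \<le> length q" using sw unfolding shortest_walk_def by blast
  with \<open>m \<noteq> []\<close> p show False unfolding q_def by simp
qed

lemma bij_betw_nth_pred:
  assumes "distinct p"
  shows "bij_betw (\<lambda>i. p ! (i - 1)) {1..length p} (set p)"
proof (rule bij_betw_imageI)
  show "inj_on (\<lambda>i. p ! (i - 1)) {1..length p}"
    unfolding inj_on_def using assms nth_eq_iff_index_eq by fastforce
  have "set p = (\<lambda>i. p ! (i - 1)) ` Suc ` {..<length p}"
    by (auto simp: in_set_conv_nth image_image)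
  also have "Suc ` {..<length p} = {1..length p}"
    by (simp add: image_Suc_lessThan)
  finally show "(\<lambda>i. p ! (i - 1)) ` {1..length p} = set p" ..
qed

lemma induced_path_set:
  assumes sg: "simple_graph_on V E" and d: "distinct p" and "set p \<subseteq> V"
    and consecutive: "\<And>i. i < length p - 1 \<Longrightarrow> E (p ! i) (p ! Suc i)"
    and no_chord: "\<And>i j. i + 1 < j \<Longrightarrow> j < length p \<Longrightarrow> \<not> E (p ! i) (p ! j)"
  shows "induced_path E (set p)"
proof -
  let ?f = "\<lambda>i. p ! (i - 1)"
  have sym: "E a b \<Longrightarrow> E b a" if "a \<in> set p" "b \<in> set p" for a b
    using sg that \<open>set p \<subseteq> V\<close> unfolding simple_graph_on_def by blast
  have irrefl: "\<not> E a a" if "a \<in> set p" for a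
    using sg that \<open>set p \<subseteq> V\<close> unfolding simple_graph_on_def by blast
  have "E (?f i) (?f j) \<longleftrightarrow> path_graph_edge i j"
    if ij: "i \<in> {1..length p}" "j \<in> {1..length p}" for i j
  proof -
    have in_p: "?f i \<in> set p" "?f j \<in> set p" using ij by auto
    then have swap: "E (?f i) (?f j) \<longleftrightarrow> E (?f j) (?f i)" using sym by blast
    consider "j = i + 1" | "i = j + 1" | "i = j" | "i + 1 < j" | "j + 1 < i" by linarith
    then show ?thesis
    proof cases
      case 1
      then show ?thesis using consecutive[of "i - 1"] ij by (simp add: path_graph_edge_def)
    next
      case 2
      then have "E (?f j) (?f i)" using consecutive[of "j - 1"] ij by simp
      with 2 swap show ?thesis by (simp add: path_graph_edge_def)
    next
      case 3
      then show ?thesis using irrefl[OF in_p(1)] by (simp add: path_graph_edge_def)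
    next
      case 4
      then show ?thesis using no_chord[of "i - 1" "j - 1"] ij by (simp add: path_graph_edge_def)
    next
      case 5
      then have "\<not> E (?f j) (?f i)" using no_chord[of "j - 1" "i - 1"] ij by simp
      with 5 swap show ?thesis by (simp add: path_graph_edge_def)
    qed
  qed
  moreover have "card (set p) = length p" using d distinct_card by blast
  ultimately show ?thesis
    unfolding induced_path_def using bij_betw_nth_pred[OF d] by metis
qed

lemma fst_one_graph [simp]: "fst (one_graph n E) = {1..n}"
  by (simp add: one_graph_def)

lemma one_graph_weight_pos:
  "0 < snd (one_graph n E) x y \<longleftrightarrow> x \<in> {1..n} \<and> y \<in> {1..n} \<and> E x y"
  by (simp add: one_graph_def)

lemma shortest_walk_induced_path:
  assumes sg: "simple_graph_on {1..n} E" and sw: "shortest_walk (one_graph n E) X u v p"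
    and "u \<noteq> v"
  shows "induced_path E (set p)"
proof -
  have w: "walk_via (one_graph n E) X p" using sw unfolding shortest_walk_def by auto
  then have V: "set p \<subseteq> {1..n}" using walk_via_subset by fastforce
  show ?thesis
  proof (rule induced_path_set[OF sg shortest_walk_distinct[OF sw \<open>u \<noteq> v\<close>] V])
    show "E (p ! i) (p ! Suc i)" if "i < length p - 1" for i
      using that w unfolding walk_via_iff_nth one_graph_weight_pos by blast
    show "\<not> E (p ! i) (p ! j)" if "i + 1 < j" "j < length p" for i j
    proof -
      have "p ! i \<in> set p" "p ! j \<in> set p" using that by simp_all
      then have "p ! i \<in> {1..n}" "p ! j \<in> {1..n}" using V by blast+
      moreover have "\<not> 0 < snd (one_graph n E) (p ! i) (p ! j)"
        using shortest_walk_no_chord[OF sw that] by simp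
      ultimately show ?thesis unfolding one_graph_weight_pos by blast
    qed
  qed
qed

(* The two clauses together say that snd H u v is the least number of edges of a walk in G
   from u to v with interior in fst G - fst H, and 0 if there is no such walk. *)
definition hop_decorated :: "dgraph \<Rightarrow> dgraph \<Rightarrow> bool" where
  "hop_decorated G H \<longleftrightarrow> fst H \<subseteq> fst G \<and>
     (\<forall>u v. 0 < snd H u v \<longrightarrow> u \<in> fst H \<and> v \<in> fst H \<and> u \<noteq> v \<and>
        (\<exists>p. walk_via G (fst G - fst H) p \<and> hd p = u \<and> last p = v \<and> length p - 1 \<le> snd H u v)) \<and>
     (\<forall>u v p. u \<in> fst H \<longrightarrow> v \<in> fst H \<longrightarrow> u \<noteq> v \<longrightarrow> walk_via G (fst G - fst H) p \<longrightarrow>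
        hd p = u \<longrightarrow> last p = v \<longrightarrow> 0 < snd H u v \<and> snd H u v \<le> length p - 1)"

lemma hop_decorated_subset: "hop_decorated G H \<Longrightarrow> fst H \<subseteq> fst G"
  unfolding hop_decorated_def by blast

lemma hop_decorated_edgeE:
  assumes "hop_decorated G H" "0 < snd H u v"
  obtains p where "u \<in> fst H" "v \<in> fst H" "u \<noteq> v" "walk_via G (fst G - fst H) p"
    "hd p = u" "last p = v" "length p - 1 \<le> snd H u v"
  using assms unfolding hop_decorated_def by blast

lemma hop_decorated_walk:
  assumes "hop_decorated G H" "u \<in> fst H" "v \<in> fst H" "u \<noteq> v"
    "walk_via G (fst G - fst H) p" "hd p = u" "last p = v"
  shows "0 < snd H u v" "snd H u v \<le> length p - 1"
  using assms unfolding hop_decorated_def by blast+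

lemma hop_decorated_self:
  assumes unit: "\<And>u v. 0 < snd G u v \<Longrightarrow> u \<in> fst G \<and> v \<in> fst G \<and> u \<noteq> v \<and> snd G u v = 1"
  shows "hop_decorated G G"
proof -
  have "0 < snd G u v \<and> snd G u v \<le> length p - 1"
    if p: "walk_via G {} p" "hd p = u" "last p = v" for u v p
  proof -
    obtain x y where "p = [x, y]"
      using walk_via_empty[OF p(1)] by (auto simp: length_Suc_conv numeral_2_eq_2)
    with p have "p = [u, v]" "0 < snd G u v" by auto
    with unit show ?thesis by simp
  qed
  moreover have "\<exists>p. walk_via G {} p \<and> hd p = u \<and> last p = v \<and> length p - 1 \<le> snd G u v"
    if "0 < snd G u v" for u v
    using that unit by (intro exI[of _ "[u, v]"]) simp
  ultimately show ?thesis
    unfolding hop_decorated_def Diff_cancel using unit by blast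
qed

lemma hop_decorated_one_graph:
  assumes "simple_graph_on {1..n} E"
  shows "hop_decorated (one_graph n E) (one_graph n E)"
proof (rule hop_decorated_self)
  fix u v assume "0 < snd (one_graph n E) u v"
  then have "u \<in> {1..n}" "v \<in> {1..n}" "E u v" unfolding one_graph_weight_pos by blast+
  moreover from this have "u \<noteq> v" using assms unfolding simple_graph_on_def by blast
  ultimately show "u \<in> fst (one_graph n E) \<and> v \<in> fst (one_graph n E) \<and> u \<noteq> v \<and>
      snd (one_graph n E) u v = 1"
    by (simp add: one_graph_def)
qed

lemma hop_decorated_weight_le:
  assumes sg: "simple_graph_on {1..n} E" and H: "hop_decorated (one_graph n E) H"
    and max: "\<forall>M'. M' \<subseteq> {1..n} \<and> induced_path E M' \<longrightarrow> card M' \<le> card M"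
  shows "snd H u v \<le> card M - 1"
proof (cases "0 < snd H u v")
  case True
  let ?X = "{1..n} - fst H"
  obtain p where p: "walk_via (one_graph n E) ?X p" "hd p = u" "last p = v"
    and uv: "u \<in> fst H" "v \<in> fst H" "u \<noteq> v"
    using hop_decorated_edgeE[OF H True] by auto
  obtain p' where p': "shortest_walk (one_graph n E) ?X u v p'"
    using shortest_walk_exists[OF p] .
  then have w': "walk_via (one_graph n E) ?X p'" "hd p' = u" "last p' = v"
    unfolding shortest_walk_def by auto
  have "snd H u v \<le> length p' - 1"
    using hop_decorated_walk(2)[OF H uv] w' by simp
  moreover have "set p' \<subseteq> {1..n}"
    using walk_via_subset[OF w'(1)] by simp
  then have "card (set p') \<le> card M"
    using max shortest_walk_induced_path[OF sg p' uv(3)] by blast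
  moreover have "card (set p') = length p'"
    using shortest_walk_distinct[OF p' uv(3)] distinct_card by blast
  ultimately show ?thesis by simp
qed simp

lemma hop_decorated_lift_walk:
  assumes H: "hop_decorated G H" and S: "S \<subseteq> fst H"
  shows "walk_via H S h \<Longrightarrow> \<exists>q. walk_via G (fst G - (fst H - S)) q \<and> hd q = hd h \<and>
    last q = last h \<and> length q - 1 \<le> walk_weight H h"
proof (induction h rule: induct_list012)
  case (3 x y zs)
  let ?Y = "fst G - (fst H - S)"
  have "0 < snd H x y" using "3"(3) by (cases zs) auto
  then obtain q1 where q1: "walk_via G (fst G - fst H) q1" "hd q1 = x" "last q1 = y"
    "length q1 - 1 \<le> snd H x y"
    by (rule hop_decorated_edgeE[OF H])
  have "fst G - fst H \<subseteq> ?Y" by blast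
  with q1(1) have q1': "walk_via G ?Y q1" by (rule walk_via_mono)
  show ?case
  proof (cases zs)
    case Nil
    with q1 q1' show ?thesis by (intro exI[of _ q1]) auto
  next
    case (Cons z r)
    have "walk_via H S (y # zs)" "y \<in> S" using "3"(3) Cons by simp_all
    then obtain q2 where q2: "walk_via G ?Y q2" "hd q2 = y" "last q2 = last (y # zs)"
      "length q2 - 1 \<le> walk_weight H (y # zs)"
      using "3"(2) by auto
    have "y \<in> ?Y" using \<open>y \<in> S\<close> S hop_decorated_subset[OF H] by auto
    note join = walk_via_join[OF q1' q2(1) q1(3) q2(2) this]
    show ?thesis
      using join q1(2,4) q2(3,4) walk_via_length[OF q1(1)] walk_via_length[OF q2(1)]
      by (intro exI[of _ "butlast q1 @ q2"]) simp
  qed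
qed auto

(* Cut p at its first vertex after hd p that lies in fst H: the part before it is a single
   edge of H, and the rest is handled by induction. *)
lemma hop_decorated_split_walk:
  assumes H: "hop_decorated G H" and S: "S \<subseteq> fst H"
  shows "distinct p \<Longrightarrow> walk_via G (fst G - (fst H - S)) p \<Longrightarrow> hd p \<in> fst H \<Longrightarrow>
    last p \<in> fst H \<Longrightarrow> \<exists>h. walk_via H S h \<and> hd h = hd p \<and> last h = last p \<and> distinct h \<and>
      set h \<subseteq> set p \<and> walk_weight H h \<le> length p - 1"
proof (induction "length p" arbitrary: p rule: less_induct)
  case less
  let ?Y = "fst G - (fst H - S)"
  obtain u t where p: "p = u # t" "t \<noteq> []"
    using walk_via_length[OF less.prems(2)] by (cases p) (auto simp: Suc_le_length_iff)
  then obtain a x b where t: "t = a @ x # b" "x \<in> fst H" "set a \<inter> fst H = {}"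
    and first: "walk_via G ?Y (u # a @ [x])"
    and rest: "b \<noteq> [] \<Longrightarrow> walk_via G ?Y (x # b) \<and> x \<in> ?Y"
    using walk_via_split_first[of G ?Y u t "fst H"] less.prems(2,4) by auto
  have "set a \<subseteq> fst G - fst H"
    using walk_via_subset[OF less.prems(2)] p(1) t(1,3) by auto
  with first have "walk_via G (fst G - fst H) (u # a @ [x])"
    by (rule walk_via_interior_subset)
  moreover have "u \<in> fst H" "u \<noteq> x" using less.prems(1,3) p(1) t(1) by auto
  ultimately have ux: "0 < snd H u x" "snd H u x \<le> length a + 1"
    using hop_decorated_walk[OF H _ t(2)] by fastforce+
  show ?case
  proof (cases "b = []")
    case True
    with \<open>u \<in> fst H\<close> t(2) ux have "walk_via H S [u, x]" by simp
    with True p t ux \<open>u \<noteq> x\<close> show ?thesis by (intro exI[of _ "[u, x]"]) auto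
  next
    case False
    with rest have "walk_via G ?Y (x # b)" "x \<in> S" using t(2) by auto
    moreover have "length (x # b) < length p" "distinct (x # b)" "last (x # b) = last p"
      using less.prems(1) p t(1) False by auto
    ultimately obtain h where h: "walk_via H S h" "hd h = x" "last h = last p" "distinct h"
      "set h \<subseteq> set (x # b)" "walk_weight H h \<le> length b"
      using less.hyps[of "x # b"] t(2) less.prems(4) by auto
    obtain r where "h = x # r" "r \<noteq> []"
      using h(2) walk_via_length[OF h(1)] by (cases h) (auto simp: Suc_le_length_iff)
    moreover have "u \<notin> set (x # b)" using less.prems(1) p(1) t(1) by auto
    ultimately show ?thesis
      using h \<open>u \<in> fst H\<close> \<open>x \<in> S\<close> ux p t(1)
      by (intro exI[of _ "u # h"]) (auto simp: walk_via_Cons_Cons simp del: walk_via.simps(4))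
  qed
qed

lemma snd_dg_contract:
  "snd (dg_contract S H) u v =
    (if u \<in> fst H - S \<and> v \<in> fst H - S \<and> u \<noteq> v \<and> (\<exists>p. path_in H S u v p)
     then (LEAST c. \<exists>p. path_in H S u v p \<and> path_weight H p = c) else 0)"
  by (simp add: dg_contract_def)

lemma dg_contract_weight_pos:
  "0 < snd (dg_contract S H) u v \<Longrightarrow>
    u \<in> fst H - S \<and> v \<in> fst H - S \<and> u \<noteq> v \<and> (\<exists>p. path_in H S u v p)"
  by (auto simp: snd_dg_contract split: if_splits)

lemma dg_contract_weight_le:
  assumes "u \<in> fst H - S" "v \<in> fst H - S" "u \<noteq> v" "path_in H S u v p"
  shows "snd (dg_contract S H) u v \<le> path_weight H p"
  using assms by (auto simp: snd_dg_contract intro: Least_le)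

lemma dg_contract_weight_attained:
  assumes "u \<in> fst H - S" "v \<in> fst H - S" "u \<noteq> v" "path_in H S u v p"
  obtains p' where "path_in H S u v p'" "path_weight H p' = snd (dg_contract S H) u v"
proof -
  have "snd (dg_contract S H) u v = (LEAST c. \<exists>p. path_in H S u v p \<and> path_weight H p = c)"
    using assms by (auto simp: snd_dg_contract)
  moreover have "\<exists>p. path_in H S u v p \<and>
      path_weight H p = (LEAST c. \<exists>p. path_in H S u v p \<and> path_weight H p = c)"
    using LeastI_ex[of "\<lambda>c. \<exists>p. path_in H S u v p \<and> path_weight H p = c"] assms(4) by blast
  ultimately show ?thesis using that by auto
qed

lemma hop_decorated_dg_contract_edge:
  assumes H: "hop_decorated G H" and S: "S \<subseteq> fst H" and pos: "0 < snd (dg_contract S H) u v"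
  obtains q where "u \<in> fst H - S" "v \<in> fst H - S" "u \<noteq> v"
    "walk_via G (fst G - (fst H - S)) q" "hd q = u" "last q = v"
    "length q - 1 \<le> snd (dg_contract S H) u v"
proof -
  obtain p where uv: "u \<in> fst H - S" "v \<in> fst H - S" "u \<noteq> v" and "path_in H S u v p"
    using dg_contract_weight_pos[OF pos] by blast
  then obtain h where h: "path_in H S u v h" "path_weight H h = snd (dg_contract S H) u v"
    by (rule dg_contract_weight_attained)
  then have "walk_via H S h" "hd h = u" "last h = v" by (simp_all add: path_in_iff_walk_via)
  with hop_decorated_lift_walk[OF H S \<open>walk_via H S h\<close>] obtain q
    where "walk_via G (fst G - (fst H - S)) q" "hd q = u" "last q = v"
      "length q - 1 \<le> snd (dg_contract S H) u v"
    using h(2) by (auto simp: path_weight_eq_walk_weight)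
  with uv that show ?thesis by blast
qed

lemma hop_decorated_dg_contract_walk:
  assumes H: "hop_decorated G H" and S: "S \<subseteq> fst H"
    and uv: "u \<in> fst H - S" "v \<in> fst H - S" "u \<noteq> v"
    and p: "walk_via G (fst G - (fst H - S)) p" "hd p = u" "last p = v"
  shows "0 < snd (dg_contract S H) u v" "snd (dg_contract S H) u v \<le> length p - 1"
proof -
  obtain p' where p': "shortest_walk G (fst G - (fst H - S)) u v p'" "length p' \<le> length p"
    using shortest_walk_exists[OF p] .
  then have "distinct p'" "walk_via G (fst G - (fst H - S)) p'" "hd p' = u" "last p' = v"
    using shortest_walk_distinct[OF p'(1) uv(3)] unfolding shortest_walk_def by auto
  then obtain h where h: "walk_via H S h" "hd h = u" "last h = v" "distinct h"
    "walk_weight H h \<le> length p' - 1"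
    using hop_decorated_split_walk[OF H S] uv by fastforce
  then have path: "path_in H S u v h" by (simp add: path_in_iff_walk_via)
  with uv have "snd (dg_contract S H) u v \<le> path_weight H h" by (rule dg_contract_weight_le)
  with h(5) p'(2) show "snd (dg_contract S H) u v \<le> length p - 1"
    by (simp add: path_weight_eq_walk_weight)
  obtain h' where "path_in H S u v h'" "path_weight H h' = snd (dg_contract S H) u v"
    using uv path by (rule dg_contract_weight_attained)
  then show "0 < snd (dg_contract S H) u v"
    using walk_weight_pos[of H S h'] by (simp add: path_in_iff_walk_via path_weight_eq_walk_weight)
qed

lemma hop_decorated_dg_contract:
  assumes H: "hop_decorated G H" and S: "S \<subseteq> fst H"
  shows "hop_decorated G (dg_contract S H)"
proof -
  have "fst (dg_contract S H) = fst H - S" by (simp add: dg_contract_def)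
  then show ?thesis
    unfolding hop_decorated_def
    using hop_decorated_subset[OF H] hop_decorated_dg_contract_walk[OF H S]
      hop_decorated_dg_contract_edge[OF H S]
    by (smt (verit) Diff_iff subset_iff)
qed

lemma dg_pr_id: "(\<And>u v. snd G u v \<le> m) \<Longrightarrow> dg_pr m G = G"
  unfolding dg_pr_def by (rule prod_eqI) (auto intro!: ext)

lemma zeta_comp_dg_pr_eq:
  assumes closed: "\<And>H S. P H \<Longrightarrow> S \<subseteq> fst H \<Longrightarrow> P (dg_contract S H)"
    and bounded: "\<And>H u v. P H \<Longrightarrow> snd H u v \<le> m" and "m \<le> k"
  shows "P H \<Longrightarrow> zeta_comp k q \<alpha> H = zeta_comp m q \<alpha> H"
proof (induction \<alpha> arbitrary: H)
  case (Cons a as)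
  have "dg_pr k G = G" "dg_pr m G = G" if "\<And>u v. snd G u v \<le> m" for G
    using that \<open>m \<le> k\<close> le_trans by (blast intro: dg_pr_id)+
  moreover have "snd (dg_restrict S H) u v \<le> m" for S u v
    using bounded[OF Cons.prems, of u v] by (simp add: dg_restrict_def)
  ultimately show ?case
    using Cons.IH closed[OF Cons.prems] bounded by (auto intro!: sum.cong)
qed simp

theorem mainTheorem3:
  fixes n :: nat and E :: "nat \<Rightarrow> nat \<Rightarrow> bool" and M :: "nat set"
    and q :: "'a::comm_ring_1" and k :: nat
  assumes "simple_graph_on {1..n} E"
    and "connected_on {1..n} E"
    and "M \<subseteq> {1..n}" and "induced_path E M"
    and "\<forall>M'. M' \<subseteq> {1..n} \<and> induced_path E M' \<longrightarrow> card M' \<le> card M"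
    and "card M \<le> k"
  shows "Psi k q (one_graph n E) = Psi (card M - 1) q (one_graph n E)"
proof -
  let ?G = "one_graph n E"
  have "zeta_comp k q \<alpha> ?G = zeta_comp (card M - 1) q \<alpha> ?G" for \<alpha>
  proof (rule zeta_comp_dg_pr_eq[where P = "hop_decorated ?G"])
    show "hop_decorated ?G (dg_contract S H)" if "hop_decorated ?G H" "S \<subseteq> fst H" for H S
      using hop_decorated_dg_contract that .
    show "snd H u v \<le> card M - 1" if "hop_decorated ?G H" for H u v
      using hop_decorated_weight_le[OF assms(1) that assms(5)] .
  qed (use assms(6) hop_decorated_one_graph[OF assms(1)] in auto)
  then show ?thesis unfolding Psi_def by auto
qed

end
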